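(* Let $c_2,c_3,c_4,c_6,v$ be independent indeterminates and set $\mu(v)=(\mu_1,\mu_2,\mu_3,\mu_4,\mu_6)=(0,\;3v+c_2,\;c_3,\;3v^2+2c_2v+c_4,\;v^3+c_2v^2+c_4v+c_6)$. Let $S(t,v)=s(t;\mu(v))$. Then \[ \frac{\partial S}{\partial v}=S\,\frac{\partial S}{\partial t}, \] and $S(t,0)=s_0(t)$, where $s_0(t)$ is the power series with $s_0(0)=0$ defined by $s_0=t^3+c_2t^2s_0+c_3s_0^2+c_4ts_0^2+c_6s_0^3$.
   Context: For parameters $\mu=(\mu_1,\mu_2,\mu_3,\mu_4,\mu_6)$, $s(t;\mu)$ denotes the unique formal power series in $t$ with $s(0;\mu)=0$ satisfying $s=t^3+\mu_1ts+\mu_2t^2s+\mu_3s^2+\mu_4ts^2+\mu_6s^3$ (the equation of the cubic $y^2+\mu_1xy+\mu_3y=x^3+\mu_2x^2+\mu_4x+\mu_6$ in Tate coordinates $t=-x/y$, $s=-1/y$). *)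

theory Defs
  imports "HOL-Computational_Algebra.Computational_Algebra"
begin

definition tate_eq :: "'b::comm_ring_1 \<Rightarrow> 'b \<Rightarrow> 'b \<Rightarrow> 'b \<Rightarrow> 'b \<Rightarrow> 'b fps \<Rightarrow> bool" where
  "tate_eq m1 m2 m3 m4 m6 s \<longleftrightarrow>
     fps_nth s 0 = 0 \<and>
     s = fps_X ^ 3 + fps_const m1 * fps_X * s + fps_const m2 * fps_X ^ 2 * s
         + fps_const m3 * s ^ 2 + fps_const m4 * fps_X * s ^ 2 + fps_const m6 * s ^ 3"

definition tate_s :: "'b::comm_ring_1 \<Rightarrow> 'b \<Rightarrow> 'b \<Rightarrow> 'b \<Rightarrow> 'b \<Rightarrow> 'b fps" where
  "tate_s m1 m2 m3 m4 m6 = (THE s. tate_eq m1 m2 m3 m4 m6 s)"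

text \<open>Partial derivative with respect to v of a power series in t whose
coefficients are polynomials in v.\<close>
definition fps_dv :: "'a::idom poly fps \<Rightarrow> 'a poly fps" where
  "fps_dv S = Abs_fps (\<lambda>n. pderiv (fps_nth S n))"

definition fps_at_v0 :: "'a::idom poly fps \<Rightarrow> 'a fps" where
  "fps_at_v0 S = Abs_fps (\<lambda>n. poly (fps_nth S n) 0)"

end

theory Submission
  imports Defs
begin

text \<open>
  Substituting \<open>x \<mapsto> x + v\<close> in \<open>y\<^sup>2 + c\<^sub>3 y = x\<^sup>3 + c\<^sub>2 x\<^sup>2 + c\<^sub>4 x + c\<^sub>6\<close> yields the coefficients
  \<open>\<mu>(v)\<close>, and they satisfy \<open>\<mu>\<^sub>2' = 3\<close>, \<open>\<mu>\<^sub>3' = 0\<close>, \<open>\<mu>\<^sub>4' = 2\<mu>\<^sub>2\<close>, \<open>\<mu>\<^sub>6' = \<mu>\<^sub>4\<close>.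
  Writing the Tate equation as \<open>F(t, v, S) = 0\<close>, these relations say exactly that
  \<open>\<partial>\<^sub>vF = S \<partial>\<^sub>tF\<close>.  Differentiating the equation in \<open>t\<close> and in \<open>v\<close> gives
  \<open>F\<^sub>S S\<^sub>v = -\<partial>\<^sub>vF = -S \<partial>\<^sub>tF = F\<^sub>S S S\<^sub>t\<close>, and \<open>F\<^sub>S\<close> has constant term 1, so it can be
  cancelled.  The value at \<open>v = 0\<close> follows from uniqueness of the Tate series, which holds
  because the right-hand side of the Tate equation determines the coefficient of \<open>t\<^sup>n\<close> from
  the lower ones.
\<close>

lemma fps_X_power_dvd_iff: "fps_X ^ n dvd (f :: 'a::comm_ring_1 fps) \<longleftrightarrow> (\<forall>i<n. f $ i = 0)"
proof
  assume "fps_X ^ n dvd f"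
  then obtain q where "f = fps_X ^ n * q" by (auto elim: dvdE)
  thus "\<forall>i<n. f $ i = 0" by (simp add: fps_X_power_mult_nth)
next
  assume "\<forall>i<n. f $ i = 0"
  hence "f = fps_X ^ n * fps_shift n f"
    by (intro fps_ext) (simp add: fps_X_power_mult_nth)
  thus "fps_X ^ n dvd f" by (metis dvd_triv_left)
qed

text \<open>For a map raising the \<open>t\<close>-adic order of differences, \<open>fps_fixpoint_coeffs G n\<close> lists
  the first \<open>n\<close> coefficients of its fixed point.\<close>

primrec fps_fixpoint_coeffs :: "('a::comm_ring_1 fps \<Rightarrow> 'a fps) \<Rightarrow> nat \<Rightarrow> 'a list" where
  "fps_fixpoint_coeffs G 0 = []"
| "fps_fixpoint_coeffs G (Suc n) = fps_fixpoint_coeffs G n @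
     [G (Abs_fps (\<lambda>i. if i < n then fps_fixpoint_coeffs G n ! i else 0)) $ n]"

lemma length_fps_fixpoint_coeffs [simp]: "length (fps_fixpoint_coeffs G n) = n"
  by (induct n) auto

lemma fps_fixpoint_coeffs_prefix:
  "i < n \<Longrightarrow> fps_fixpoint_coeffs G (n + k) ! i = fps_fixpoint_coeffs G n ! i"
  by (induct k) (auto simp: nth_append)

lemma fps_contraction_ex1_fixpoint:
  fixes G :: "'a::comm_ring_1 fps \<Rightarrow> 'a fps"
  assumes contr: "\<And>a b n. fps_X ^ n dvd a - b \<Longrightarrow> fps_X ^ Suc n dvd G a - G b"
  shows "\<exists>!s. G s = s"
proof (rule ex_ex1I)
  define s where "s = Abs_fps (\<lambda>n. fps_fixpoint_coeffs G (Suc n) ! n)"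
  have s_nth: "s $ i = fps_fixpoint_coeffs G n ! i" if "i < n" for i n
    using fps_fixpoint_coeffs_prefix[of i "Suc i" G "n - Suc i"] that by (simp add: s_def)
  show "\<exists>s. G s = s"
  proof (intro exI fps_ext)
    fix n
    define t where "t = Abs_fps (\<lambda>i. if i < n then fps_fixpoint_coeffs G n ! i else 0)"
    have "fps_X ^ n dvd s - t" by (simp add: fps_X_power_dvd_iff t_def s_nth)
    hence "(G s - G t) $ n = 0" using contr fps_X_power_dvd_iff by blast
    hence "G s $ n = G t $ n" by simp
    also have "\<dots> = s $ n" by (simp add: s_def t_def nth_append)
    finally show "G s $ n = s $ n" .
  qed
next
  fix s s' assume fixpoints: "G s = s" "G s' = s'"
  have "fps_X ^ n dvd s - s'" for n
  proof (induct n)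
    case (Suc n)
    show ?case using contr[OF Suc] fixpoints by simp
  qed simp
  thus "s = s'"
    by (intro fps_ext) (metis fps_X_power_dvd_iff lessI fps_sub_nth right_minus_eq)
qed

definition tate_rhs :: "'b::comm_ring_1 \<Rightarrow> 'b \<Rightarrow> 'b \<Rightarrow> 'b \<Rightarrow> 'b \<Rightarrow> 'b fps \<Rightarrow> 'b fps" where
  "tate_rhs m1 m2 m3 m4 m6 s = fps_X ^ 3 + fps_const m1 * fps_X * s + fps_const m2 * fps_X ^ 2 * s
     + fps_const m3 * s ^ 2 + fps_const m4 * fps_X * s ^ 2 + fps_const m6 * s ^ 3"

lemma tate_eq_iff: "tate_eq m1 m2 m3 m4 m6 s \<longleftrightarrow> s $ 0 = 0 \<and> s = tate_rhs m1 m2 m3 m4 m6 s"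
  by (simp add: tate_eq_def tate_rhs_def)

lemma tate_rhs_diff_dvd:
  fixes a b :: "'b::comm_ring_1 fps"
  assumes "fps_X ^ n dvd a - b" and "a $ 0 = 0" and "b $ 0 = 0"
  shows "fps_X ^ Suc n dvd tate_rhs m1 m2 m3 m4 m6 a - tate_rhs m1 m2 m3 m4 m6 b"
proof -
  define q where "q = fps_const m1 * fps_X + fps_const m2 * fps_X ^ 2 + fps_const m3 * (a + b)
     + fps_const m4 * fps_X * (a + b) + fps_const m6 * (a ^ 2 + a * b + b ^ 2)"
  have "tate_rhs m1 m2 m3 m4 m6 a - tate_rhs m1 m2 m3 m4 m6 b = (a - b) * q"
    by (simp add: tate_rhs_def q_def algebra_simps power2_eq_square power3_eq_cube)
  moreover have "fps_X dvd q"
    using assms(2,3) by (simp add: fps_X_power_dvd_iff[of 1, simplified] q_def power2_eq_square)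
  ultimately show ?thesis
    using mult_dvd_mono[OF assms(1)] by (simp add: mult.commute)
qed

lemma tate_eq_ex1: "\<exists>!s. tate_eq m1 m2 m3 m4 m6 (s :: 'b::comm_ring_1 fps)"
proof -
  \<comment> \<open>Dropping the constant term makes \<open>G\<close> contracting on all series.\<close>
  define G where "G s = tate_rhs m1 m2 m3 m4 m6 (s - fps_const (s $ 0))" for s :: "'b fps"
  have G_nth_0: "G s $ 0 = 0" for s
    by (simp add: G_def tate_rhs_def power2_eq_square power3_eq_cube)
  have "tate_eq m1 m2 m3 m4 m6 s \<longleftrightarrow> G s = s" for s
    unfolding tate_eq_iff G_def using G_nth_0[of s] by (auto simp: G_def)
  moreover have "\<exists>!s. G s = s"
  proof (rule fps_contraction_ex1_fixpoint)
    fix a b :: "'b fps" and n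
    assume "fps_X ^ n dvd a - b"
    hence "fps_X ^ n dvd (a - fps_const (a $ 0)) - (b - fps_const (b $ 0))"
      by (auto simp: fps_X_power_dvd_iff)
    thus "fps_X ^ Suc n dvd G a - G b"
      unfolding G_def by (rule tate_rhs_diff_dvd) auto
  qed
  ultimately show ?thesis by simp
qed

lemma tate_eq_tate_s: "tate_eq m1 m2 m3 m4 m6 (tate_s m1 m2 m3 m4 m6)"
  unfolding tate_s_def by (rule theI' [OF tate_eq_ex1])

lemma tate_s_eqI: "tate_eq m1 m2 m3 m4 m6 s \<Longrightarrow> tate_s m1 m2 m3 m4 m6 = s"
  using tate_eq_tate_s tate_eq_ex1 by blast

lemma fps_dv_nth [simp]: "fps_dv S $ n = pderiv (S $ n)"
  by (simp add: fps_dv_def)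

lemma fps_dv_add [simp]: "fps_dv (a + b) = fps_dv a + fps_dv b"
  by (rule fps_ext) (simp add: pderiv_add)

lemma fps_dv_mult [simp]: "fps_dv (a * b) = fps_dv a * b + a * fps_dv b"
proof (rule fps_ext)
  fix n
  have "(\<Sum>i=0..n. pderiv (a $ i * b $ (n - i)))
      = (\<Sum>i=0..n. pderiv (a $ i) * b $ (n - i) + a $ i * pderiv (b $ (n - i)))"
    by (rule sum.cong) (simp_all add: pderiv_mult)
  thus "fps_dv (a * b) $ n = (fps_dv a * b + a * fps_dv b) $ n"
    by (simp add: fps_mult_nth higher_pderiv_sum[of 1, simplified] sum.distrib)
qed

lemma fps_dv_const [simp]: "fps_dv (fps_const c) = fps_const (pderiv c)"
  by (rule fps_ext) simp

lemma fps_dv_X [simp]: "fps_dv fps_X = 0"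
  by (rule fps_ext) (simp add: fps_X_nth)

lemma fps_at_v0_nth [simp]: "fps_at_v0 S $ n = poly (S $ n) 0"
  by (simp add: fps_at_v0_def)

lemma fps_at_v0_add [simp]: "fps_at_v0 (a + b) = fps_at_v0 a + fps_at_v0 b"
  by (rule fps_ext) simp

lemma fps_at_v0_mult [simp]: "fps_at_v0 (a * b) = fps_at_v0 a * fps_at_v0 b"
  by (rule fps_ext) (simp add: fps_mult_nth poly_sum)

lemma fps_at_v0_power [simp]: "fps_at_v0 (a ^ n) = fps_at_v0 a ^ n"
proof (induct n)
  case 0
  show ?case by (rule fps_ext) simp
qed simp

lemma fps_at_v0_const [simp]: "fps_at_v0 (fps_const c) = fps_const (poly c 0)"
  by (rule fps_ext) simp

lemma fps_at_v0_X [simp]: "fps_at_v0 fps_X = fps_X"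
  by (rule fps_ext) (simp add: fps_X_nth)

lemma fps_at_v0_tate_rhs:
  "fps_at_v0 (tate_rhs m1 m2 m3 m4 m6 s)
     = tate_rhs (poly m1 0) (poly m2 0) (poly m3 0) (poly m4 0) (poly m6 0) (fps_at_v0 s)"
  by (simp add: tate_rhs_def)

lemma fps_at_v0_tate_s:
  "fps_at_v0 (tate_s m1 m2 m3 m4 m6) = tate_s (poly m1 0) (poly m2 0) (poly m3 0) (poly m4 0) (poly m6 0)"
proof (rule tate_s_eqI [symmetric])
  define S where "S = tate_s m1 m2 m3 m4 m6"
  have "S $ 0 = 0" and S_eq: "S = tate_rhs m1 m2 m3 m4 m6 S"
    using tate_eq_tate_s [of m1 m2 m3 m4 m6] unfolding S_def tate_eq_iff by simp_all
  moreover have "fps_at_v0 S = fps_at_v0 (tate_rhs m1 m2 m3 m4 m6 S)"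
    using S_eq by (rule arg_cong)
  ultimately show "tate_eq (poly m1 0) (poly m2 0) (poly m3 0) (poly m4 0) (poly m6 0) (fps_at_v0 S)"
    unfolding tate_eq_iff fps_at_v0_tate_rhs by simp
qed

lemma fps_dv_tate_s:
  fixes m2 m3 m4 m6 :: "'a::idom poly"
  assumes "pderiv m2 = 3" and "pderiv m3 = 0" and "pderiv m4 = 2 * m2" and "pderiv m6 = m4"
  defines "S \<equiv> tate_s 0 m2 m3 m4 m6"
  shows "fps_dv S = S * fps_deriv S"
proof -
  have S_nth_0: "S $ 0 = 0" and S_eq: "S = tate_rhs 0 m2 m3 m4 m6 S"
    using tate_eq_tate_s [of 0 m2 m3 m4 m6] unfolding S_def tate_eq_iff by simp_all
  define F_S where "F_S = 1 - (fps_const m2 * fps_X ^ 2 + 2 * fps_const m3 * S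
    + 2 * fps_const m4 * fps_X * S + 3 * fps_const m6 * S ^ 2)"
  define rhs_t where "rhs_t = 3 * fps_X ^ 2 + 2 * fps_const m2 * fps_X * S + fps_const m4 * S ^ 2"
  have fps_dv_coeffs: "fps_const (pderiv m2) = 3" "fps_const (pderiv m3) = 0"
    "fps_const (pderiv m4) = 2 * fps_const m2" "fps_const (pderiv m6) = fps_const m4"
    using assms(1-4) by (simp_all add: fps_numeral_fps_const)
  have "fps_dv S = fps_dv (tate_rhs 0 m2 m3 m4 m6 S)"
    using S_eq by (rule arg_cong)
  \<comment> \<open>The hypotheses on \<open>pderiv\<close> say that \<open>\<partial>\<^sub>v\<close> of the right-hand side at fixed \<open>S\<close> is \<open>S * rhs_t\<close>.\<close>
  also have "\<dots> = S * rhs_t + (1 - F_S) * fps_dv S"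
    by (simp add: tate_rhs_def F_S_def rhs_t_def fps_dv_coeffs
        power2_eq_square power3_eq_cube algebra_simps)
  finally have dv: "F_S * fps_dv S = S * rhs_t"
    by (simp add: algebra_simps)
  have "fps_deriv S = fps_deriv (tate_rhs 0 m2 m3 m4 m6 S)"
    using S_eq by (rule arg_cong)
  also have "\<dots> = rhs_t + (1 - F_S) * fps_deriv S"
    by (simp add: tate_rhs_def F_S_def rhs_t_def power2_eq_square power3_eq_cube algebra_simps)
  finally have dt: "F_S * fps_deriv S = rhs_t"
    by (simp add: algebra_simps)
  have "F_S \<noteq> 0"
  proof
    assume "F_S = 0"
    hence "F_S $ 0 = 0" by simp
    thus False by (simp add: F_S_def S_nth_0 power2_eq_square)
  qed
  moreover have "F_S * fps_dv S = F_S * (S * fps_deriv S)"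
    by (simp add: dv dt mult.left_commute)
  ultimately show ?thesis by simp
qed

theorem mainTheorem6:
  fixes c2 c3 c4 c6 :: "'a::idom"
  defines "v \<equiv> [:0, 1:] :: 'a poly"
  defines "S \<equiv> tate_s 0 (3 * v + [:c2:]) [:c3:]
                 (3 * v ^ 2 + 2 * [:c2:] * v + [:c4:])
                 (v ^ 3 + [:c2:] * v ^ 2 + [:c4:] * v + [:c6:])"
  shows "fps_dv S = S * fps_deriv S \<and> fps_at_v0 S = tate_s 0 c2 c3 c4 c6"
proof
  have pderiv_v: "pderiv v = 1" and pderiv_const: "pderiv [:c:] = 0" for c
    by (simp_all add: v_def pderiv_pCons)
  show "fps_dv S = S * fps_deriv S"
    unfolding S_def
    by (rule fps_dv_tate_s)
       (simp_all add: pderiv_add pderiv_mult pderiv_v pderiv_const pderiv_smult power2_eq_square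
         power3_eq_cube algebra_simps)
  show "fps_at_v0 S = tate_s 0 c2 c3 c4 c6"
    by (simp add: S_def fps_at_v0_tate_s v_def)
qed

end
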